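(* Let $\gamma$ be a hyperbolic element of $PSL(2,\mathbb{R})$. Then the set of periodic points of the map $\varphi\mapsto\varphi\circ\gamma^{-1}$ on $\mathrm{Har}(\mathbb{D})$, i.e. of $\varphi$ with $\varphi\circ\gamma^{k}=\varphi$ for some integer $k\ge1$, is dense in $\mathrm{Har}(\mathbb{D})$.
   Context: $\mathrm{Har}(\mathbb{D})$ is the set of complex-valued harmonic functions $\varphi$ on the open unit disc $\mathbb{D}$ with $\varphi(\mathbb{D})\subset\overline{\mathbb{D}}$, with the topology of uniform convergence on compact subsets. $PSL(2,\mathbb{R})\cong PSU(1,1)$ acts on $\mathbb{D}$ by $z\mapsto(\alpha z+\beta)/(\bar\beta z+\bar\alpha)$, $|\alpha|^2-|\beta|^2=1$. Hyperbolic means $|\mathrm{tr}|>2$. *)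

theory Defs
  imports "HOL-Analysis.Analysis"
begin

definition dx :: "(complex \<Rightarrow> complex) \<Rightarrow> complex \<Rightarrow> complex \<Rightarrow> bool" where
  "dx f z v \<longleftrightarrow> ((\<lambda>t::real. f (z + complex_of_real t)) has_vector_derivative v) (at 0)"

definition dy :: "(complex \<Rightarrow> complex) \<Rightarrow> complex \<Rightarrow> complex \<Rightarrow> bool" where
  "dy f z v \<longleftrightarrow> ((\<lambda>t::real. f (z + \<i> * complex_of_real t)) has_vector_derivative v) (at 0)"

definition harmonic_on :: "(complex \<Rightarrow> complex) \<Rightarrow> complex set \<Rightarrow> bool" where
  "harmonic_on f S \<longleftrightarrow> open S \<and>
     (\<exists>fx fy fxx fxy fyx fyy.
        (\<forall>z\<in>S. dx f z (fx z) \<and> dy f z (fy z) \<and>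
                dx fx z (fxx z) \<and> dy fx z (fxy z) \<and>
                dx fy z (fyx z) \<and> dy fy z (fyy z) \<and>
                fxx z + fyy z = 0) \<and>
        continuous_on S f \<and> continuous_on S fx \<and> continuous_on S fy \<and>
        continuous_on S fxx \<and> continuous_on S fxy \<and>
        continuous_on S fyx \<and> continuous_on S fyy)"

definition Har :: "(complex \<Rightarrow> complex) set" where
  "Har = {\<phi>. harmonic_on \<phi> (ball 0 1) \<and> \<phi> ` ball 0 1 \<subseteq> cball 0 1}"

text \<open>The element of PSU(1,1) given by (alpha, beta) with |alpha|^2 - |beta|^2 = 1.\<close>
definition moeb :: "complex \<Rightarrow> complex \<Rightarrow> complex \<Rightarrow> complex" where
  "moeb \<alpha> \<beta> z = (\<alpha> * z + \<beta>) / (cnj \<beta> * z + cnj \<alpha>)"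

text \<open>Hyperbolic: |trace| > 2, where the matrix is [[alpha, beta],[cnj beta, cnj alpha]].\<close>
definition hyperbolic :: "complex \<Rightarrow> complex \<Rightarrow> bool" where
  "hyperbolic \<alpha> \<beta> \<longleftrightarrow> cmod \<alpha> ^ 2 - cmod \<beta> ^ 2 = 1 \<and> \<bar>Re (\<alpha> + cnj \<alpha>)\<bar> > 2"

end

(* Conjugate gamma = moeb alpha beta by a Cayley transform T of the unit disc onto the right
   half-plane that sends the two fixed points of gamma on the unit circle to 0 and infinity: then
   T o gamma = kappa * T for a real kappa > 0 with kappa ~= 1.  The entire function
   G(w) = pi / (2 sinh theta) * sin (2 theta w / pi) maps the strip |Im w| < pi/2 into itself, has
   period pi^2/theta and tends to the identity locally uniformly as theta -> 0.  Hence
   F(u) = exp (G (Ln u)) is a holomorphic self-map of the half-plane, invariant under u -> kappa^k u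
   as soon as theta = pi^2 / (k |ln kappa|).  The holomorphic self-maps T^-1 o F o T of the disc
   are therefore gamma^k-invariant and converge to the identity locally uniformly as k -> infinity,
   and composing phi in Har with them gives gamma^k-invariant elements of Har converging to phi. *)

theory Submission
  imports Defs "HOL-Complex_Analysis.Complex_Analysis" "HOL-Real_Asymp.Real_Asymp"
begin

section \<open>Harmonic functions under holomorphic changes of variables\<close>

lemma has_derivative_imp_dx_dy:
  assumes "(f has_derivative D) (at z)"
  shows "dx f z (D 1)" "dy f z (D \<i>)"
proof -
  have lin: "linear D" using assms has_derivative_linear by blast
  have "((\<lambda>t::real. f (z + c * complex_of_real t)) has_derivative (\<lambda>t. t *\<^sub>R D c)) (at 0)" for c
  proof -
    have "((f \<circ> (\<lambda>t::real. z + c * complex_of_real t)) has_derivative (D \<circ> (\<lambda>t. c * complex_of_real t))) (at 0)"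
      by (rule diff_chain_at) (auto intro!: derivative_eq_intros assms)
    moreover have "D (c * complex_of_real t) = t *\<^sub>R D c" for t
      using linear_scale[OF lin, of t c] by (simp add: scaleR_conv_of_real mult.commute)
    ultimately show ?thesis by (simp add: o_def)
  qed
  from this[of 1] this[of \<i>] show "dx f z (D 1)" "dy f z (D \<i>)"
    unfolding dx_def dy_def has_vector_derivative_def by simp_all
qed

lemma dy_increment_bound:
  fixes f fy :: "complex \<Rightarrow> complex"
  assumes dy: "\<And>t. t \<in> closed_segment 0 b \<Longrightarrow> dy f (w + \<i> * of_real t) (fy (w + \<i> * of_real t))"
    and bound: "\<And>t. t \<in> closed_segment 0 b \<Longrightarrow> norm (fy (w + \<i> * of_real t) - fy w) \<le> B"
  shows "norm (f (w + \<i> * of_real b) - f w - b *\<^sub>R fy w) \<le> \<bar>b\<bar> * B"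
proof -
  define v where "v t = f (w + \<i> * of_real t)" for t
  have "(v has_vector_derivative fy (w + \<i> * of_real t)) (at t within closed_segment 0 b)"
    if "t \<in> closed_segment 0 b" for t
  proof -
    let ?w = "w + \<i> * of_real t"
    have "((\<lambda>s. f (?w + \<i> * of_real s)) has_vector_derivative fy ?w) (at ((\<lambda>u. u - t) t))"
      using dy[OF that] unfolding dy_def by simp
    then have "(((\<lambda>s. f (?w + \<i> * of_real s)) \<circ> (\<lambda>u. u - t)) has_vector_derivative (1::real) *\<^sub>R fy ?w) (at t)"
      by (intro vector_diff_chain_at) (auto intro!: derivative_eq_intros)
    moreover have "(\<lambda>s. f (?w + \<i> * of_real s)) \<circ> (\<lambda>u. u - t) = v"
      by (auto simp: v_def algebra_simps)
    ultimately show ?thesis by (simp add: has_vector_derivative_at_within)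
  qed
  then have "norm (v b - v 0 - (b - 0) *\<^sub>R fy (w + \<i> * of_real 0)) \<le> norm (b - 0) * B"
    by (rule vector_differentiable_bound_linearization) (use bound in auto)
  then show ?thesis by (simp add: v_def)
qed

lemma increment_estimate_partials:
  fixes f fx fy :: "complex \<Rightarrow> complex" and a b :: real
  assumes dy: "\<And>t. \<bar>t\<bar> \<le> \<bar>b\<bar> \<Longrightarrow>
      dy f (z + of_real a + \<i> * of_real t) (fy (z + of_real a + \<i> * of_real t))"
    and fy: "\<And>t. \<bar>t\<bar> \<le> \<bar>b\<bar> \<Longrightarrow> norm (fy (z + of_real a + \<i> * of_real t) - fy z) \<le> B"
  shows "norm (f (z + of_real a + \<i> * of_real b) - f z - (a *\<^sub>R fx z + b *\<^sub>R fy z))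
           \<le> norm (f (z + of_real a) - f z - a *\<^sub>R fx z) + 3 * B * \<bar>b\<bar>"
proof -
  define w where "w = z + of_real a"
  have seg: "\<bar>t\<bar> \<le> \<bar>b\<bar>" if "t \<in> closed_segment 0 b" for t
    using that by (auto simp: closed_segment_real_eq abs_mult mult_left_le)
  have shift: "norm (fy w - fy z) \<le> B" using fy[of 0] by (simp add: w_def)
  have "norm (fy (w + \<i> * of_real t) - fy w) \<le> 2 * B" if "\<bar>t\<bar> \<le> \<bar>b\<bar>" for t
    using fy[OF that] shift norm_triangle_ineq4[of "fy (w + \<i> * of_real t) - fy z" "fy w - fy z"]
    by (simp add: w_def)
  then have vertical: "norm (f (w + \<i> * of_real b) - f w - b *\<^sub>R fy w) \<le> 2 * B * \<bar>b\<bar>"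
    using dy seg dy_increment_bound[of b f w fy "2 * B"] unfolding w_def by (simp add: mult.commute)
  have "norm (b *\<^sub>R fy w - b *\<^sub>R fy z) \<le> B * \<bar>b\<bar>"
    using mult_left_mono[OF shift, of "\<bar>b\<bar>"] by (simp add: mult.commute flip: scaleR_diff_right)
  moreover have "norm (f (w + \<i> * of_real b) - f z - (a *\<^sub>R fx z + b *\<^sub>R fy z)) \<le>
      norm (f (w + \<i> * of_real b) - f w - b *\<^sub>R fy w) + norm (b *\<^sub>R fy w - b *\<^sub>R fy z)
      + norm (f w - f z - a *\<^sub>R fx z)"
    by (rule order_trans[OF _ add_right_mono[OF norm_triangle_ineq]], rule order_trans[OF _ norm_triangle_ineq])
      (simp add: w_def algebra_simps)
  ultimately show ?thesis
    using vertical unfolding w_def[symmetric] by linarith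
qed

(* Only fy needs to be continuous: the increment is split into a horizontal step, controlled by
   dx at z, and a vertical segment, controlled by the mean value inequality for dy. *)
lemma has_derivative_if_dx_continuous_dy:
  fixes f fx fy :: "complex \<Rightarrow> complex"
  assumes "open S" "z \<in> S" and dx: "dx f z (fx z)"
    and dy: "\<And>w. w \<in> S \<Longrightarrow> dy f w (fy w)" and cont: "continuous_on S fy"
  shows "(f has_derivative (\<lambda>h. Re h *\<^sub>R fx z + Im h *\<^sub>R fy z)) (at z)"
  unfolding has_derivative_at_alt
proof (intro conjI allI impI)
  show "bounded_linear (\<lambda>h. Re h *\<^sub>R fx z + Im h *\<^sub>R fy z)"
    by (intro bounded_linear_intros bounded_linear_Re bounded_linear_Im)
  fix e :: real assume "e > 0"
  define e' where "e' = e / 4"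
  have "e' > 0" using \<open>e > 0\<close> by (simp add: e'_def)
  have "((\<lambda>t::real. f (z + of_real t)) has_derivative (\<lambda>t. t *\<^sub>R fx z)) (at 0)"
    using dx unfolding dx_def has_vector_derivative_def .
  then obtain d1 where "d1 > 0" and
    d1: "\<And>a::real. \<bar>a\<bar> < d1 \<Longrightarrow> norm (f (z + of_real a) - f z - a *\<^sub>R fx z) \<le> e' * \<bar>a\<bar>"
    unfolding has_derivative_at_alt using \<open>e' > 0\<close> by fastforce
  have "isCont fy z" using cont assms(1,2) by (simp add: continuous_on_eq_continuous_at)
  then obtain d2 where "d2 > 0" and d2: "\<And>w. dist w z < d2 \<Longrightarrow> norm (fy w - fy z) < e'"
    unfolding continuous_at_eps_delta dist_norm using \<open>e' > 0\<close> by blast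
  obtain d3 where "d3 > 0" and d3: "ball z d3 \<subseteq> S" using assms(1,2) open_contains_ball by blast
  show "\<exists>d>0. \<forall>y. norm (y - z) < d \<longrightarrow>
          norm (f y - f z - (Re (y - z) *\<^sub>R fx z + Im (y - z) *\<^sub>R fy z)) \<le> e * norm (y - z)"
  proof (intro exI[of _ "min d1 (min d2 d3)"] conjI allI impI)
    show "min d1 (min d2 d3) > 0" using \<open>d1 > 0\<close> \<open>d2 > 0\<close> \<open>d3 > 0\<close> by simp
    fix y assume y: "norm (y - z) < min d1 (min d2 d3)"
    define a where "a = Re (y - z)"
    define b where "b = Im (y - z)"
    have ab: "\<bar>a\<bar> \<le> norm (y - z)" "\<bar>b\<bar> \<le> norm (y - z)"
      unfolding a_def b_def by (metis abs_Re_le_cmod, metis abs_Im_le_cmod)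
    have near: "dist (z + of_real a + \<i> * of_real t) z < min d2 d3" if "\<bar>t\<bar> \<le> \<bar>b\<bar>" for t
    proof -
      have "dist (z + of_real a + \<i> * of_real t) z = norm (Complex a t)"
        by (simp add: dist_norm complex_eq_iff cmod_def)
      also have "\<dots> \<le> norm (Complex a b)" using that by (simp add: cmod_def abs_le_square_iff)
      also have "\<dots> = norm (y - z)" by (simp add: a_def b_def cmod_def)
      finally show ?thesis using y by simp
    qed
    have "y = z + of_real a + \<i> * of_real b" by (simp add: a_def b_def complex_eq_iff)
    then have "norm (f y - f z - (a *\<^sub>R fx z + b *\<^sub>R fy z))
        \<le> norm (f (z + of_real a) - f z - a *\<^sub>R fx z) + 3 * e' * \<bar>b\<bar>"
    proof (simp only:, intro increment_estimate_partials)
      fix t assume "\<bar>t\<bar> \<le> \<bar>b\<bar>"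
      then have "dist (z + of_real a + \<i> * of_real t) z < d2" "z + of_real a + \<i> * of_real t \<in> S"
        using near d3 by (auto simp: dist_commute)
      then show "dy f (z + of_real a + \<i> * of_real t) (fy (z + of_real a + \<i> * of_real t))"
        "norm (fy (z + of_real a + \<i> * of_real t) - fy z) \<le> e'"
        using dy d2 less_imp_le by blast+
    qed
    also have "\<dots> \<le> e' * \<bar>a\<bar> + 3 * e' * \<bar>b\<bar>" using d1 y ab(1) by simp
    also have "\<dots> \<le> e * norm (y - z)"
      using mult_left_mono[OF ab(1), of e] mult_left_mono[OF ab(2), of e] \<open>e > 0\<close>
      unfolding e'_def by linarith
    finally show "norm (f y - f z - (Re (y - z) *\<^sub>R fx z + Im (y - z) *\<^sub>R fy z)) \<le> e * norm (y - z)"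
      by (simp add: a_def b_def)
  qed
qed

lemma harmonic_onE:
  assumes "harmonic_on f S"
  obtains fx fy fxx fxy fyx fyy where
    "\<And>w. w \<in> S \<Longrightarrow> (f has_derivative (\<lambda>h. Re h *\<^sub>R fx w + Im h *\<^sub>R fy w)) (at w)"
    "\<And>w. w \<in> S \<Longrightarrow> (fx has_derivative (\<lambda>h. Re h *\<^sub>R fxx w + Im h *\<^sub>R fxy w)) (at w)"
    "\<And>w. w \<in> S \<Longrightarrow> (fy has_derivative (\<lambda>h. Re h *\<^sub>R fyx w + Im h *\<^sub>R fyy w)) (at w)"
    "\<And>w. w \<in> S \<Longrightarrow> fxx w + fyy w = 0"
    "continuous_on S f" "continuous_on S fx" "continuous_on S fy"
    "continuous_on S fxx" "continuous_on S fxy" "continuous_on S fyx" "continuous_on S fyy"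
proof -
  obtain fx fy fxx fxy fyx fyy where
    P: "\<forall>z\<in>S. dx f z (fx z) \<and> dy f z (fy z) \<and> dx fx z (fxx z) \<and> dy fx z (fxy z) \<and>
              dx fy z (fyx z) \<and> dy fy z (fyy z) \<and> fxx z + fyy z = 0" and
    C: "continuous_on S f" "continuous_on S fx" "continuous_on S fy"
       "continuous_on S fxx" "continuous_on S fxy" "continuous_on S fyx" "continuous_on S fyy"
    and "open S"
    using assms unfolding harmonic_on_def by blast
  show ?thesis
    by (rule that[of fx fy fxx fxy fyx fyy])
      (use P C \<open>open S\<close> in \<open>auto intro!: has_derivative_if_dx_continuous_dy[of S]\<close>)
qed

lemma harmonic_onI_has_derivative:
  assumes "open S"
    and "\<And>z. z \<in> S \<Longrightarrow> (f has_derivative Df z) (at z)"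
    and "\<And>z. z \<in> S \<Longrightarrow> (fx has_derivative Dfx z) (at z)"
    and "\<And>z. z \<in> S \<Longrightarrow> (fy has_derivative Dfy z) (at z)"
    and "\<And>z. z \<in> S \<Longrightarrow> Df z 1 = fx z \<and> Df z \<i> = fy z"
    and "\<And>z. z \<in> S \<Longrightarrow> Dfx z 1 + Dfy z \<i> = 0"
    and "continuous_on S f" "continuous_on S fx" "continuous_on S fy"
    and "continuous_on S (\<lambda>z. Dfx z 1)" "continuous_on S (\<lambda>z. Dfx z \<i>)"
    and "continuous_on S (\<lambda>z. Dfy z 1)" "continuous_on S (\<lambda>z. Dfy z \<i>)"
  shows "harmonic_on f S"
proof -
  have partials: "dx f z (fx z) \<and> dy f z (fy z) \<and> dx fx z (Dfx z 1) \<and> dy fx z (Dfx z \<i>) \<and>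
        dx fy z (Dfy z 1) \<and> dy fy z (Dfy z \<i>) \<and> Dfx z 1 + Dfy z \<i> = 0" if "z \<in> S" for z
    using has_derivative_imp_dx_dy[OF assms(2)[OF that]] has_derivative_imp_dx_dy[OF assms(3)[OF that]]
      has_derivative_imp_dx_dy[OF assms(4)[OF that]] assms(5,6)[OF that] by simp
  show ?thesis
    unfolding harmonic_on_def
    by (rule conjI[OF assms(1)], rule exI[of _ fx], rule exI[of _ fy],
        rule exI[of _ "\<lambda>z. Dfx z 1"], rule exI[of _ "\<lambda>z. Dfx z \<i>"],
        rule exI[of _ "\<lambda>z. Dfy z 1"], rule exI[of _ "\<lambda>z. Dfy z \<i>"]) (use partials assms(7-) in blast)
qed

lemma harmonic_on_compose_holomorphic:
  assumes "harmonic_on f T" and "g holomorphic_on S" and "open S" and gST: "g ` S \<subseteq> T"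
  shows "harmonic_on (\<lambda>z. f (g z)) S"
proof -
  obtain fx fy fxx fxy fyx fyy where
    df: "\<And>w. w \<in> T \<Longrightarrow> (f has_derivative (\<lambda>h. Re h *\<^sub>R fx w + Im h *\<^sub>R fy w)) (at w)" and
    dfx: "\<And>w. w \<in> T \<Longrightarrow> (fx has_derivative (\<lambda>h. Re h *\<^sub>R fxx w + Im h *\<^sub>R fxy w)) (at w)" and
    dfy: "\<And>w. w \<in> T \<Longrightarrow> (fy has_derivative (\<lambda>h. Re h *\<^sub>R fyx w + Im h *\<^sub>R fyy w)) (at w)" and
    laplace: "\<And>w. w \<in> T \<Longrightarrow> fxx w + fyy w = 0" and
    cont: "continuous_on T f" "continuous_on T fx" "continuous_on T fy"
      "continuous_on T fxx" "continuous_on T fxy" "continuous_on T fyx" "continuous_on T fyy"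
    using harmonic_onE[OF assms(1)] by blast
  define g1 where "g1 = deriv g"
  define g2 where "g2 = deriv g1"
  have "g1 holomorphic_on S" "g2 holomorphic_on S"
    unfolding g1_def g2_def using assms(2,3) by (auto intro: holomorphic_deriv)
  then have dg: "(g has_derivative (\<lambda>h. g1 z * h)) (at z)" "(g1 has_derivative (\<lambda>h. g2 z * h)) (at z)"
    if "z \<in> S" for z
    using holomorphic_derivI[OF _ assms(3) that] assms(2)
    unfolding g1_def g2_def has_field_derivative_def by auto
  have cg: "continuous_on S g" "continuous_on S g1" "continuous_on S g2"
    using assms(2) \<open>g1 holomorphic_on S\<close> \<open>g2 holomorphic_on S\<close> holomorphic_on_imp_continuous_on by blast+
  have cont_g: "continuous_on S (\<lambda>z. u (g z))" if "continuous_on T u" for u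
    by (rule continuous_on_compose2[OF that cg(1) gST])
  define P where "P c z = Re (c z) *\<^sub>R fx (g z) + Im (c z) *\<^sub>R fy (g z)" for c z
  define DP where "DP c c' z h =
      Re (c z) *\<^sub>R (Re (g1 z * h) *\<^sub>R fxx (g z) + Im (g1 z * h) *\<^sub>R fxy (g z)) + Re (c' z * h) *\<^sub>R fx (g z) +
      (Im (c z) *\<^sub>R (Re (g1 z * h) *\<^sub>R fyx (g z) + Im (g1 z * h) *\<^sub>R fyy (g z)) + Im (c' z * h) *\<^sub>R fy (g z))"
    for c c' z h
  have dP: "(P c has_derivative DP c c' z) (at z)"
    if "z \<in> S" "(c has_derivative (\<lambda>h. c' z * h)) (at z)" for c c' z
  proof -
    have "g z \<in> T" using gST that(1) by blast
    then show ?thesis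
      unfolding P_def[abs_def] DP_def
      by (intro has_derivative_add has_derivative_scaleR has_derivative_Re has_derivative_Im that(2)
          has_derivative_compose[OF dg(1)[OF that(1)] dfx] has_derivative_compose[OF dg(1)[OF that(1)] dfy])
  qed
  \<comment> \<open>The partials of f o g are P g1 and P (i g1); in the Laplacian the terms with g2 cancel,
      leaving |g1|^2 times the Laplacian of f at g z.\<close>
  show ?thesis
  proof (rule harmonic_onI_has_derivative[of S _ "\<lambda>z h. Re (g1 z * h) *\<^sub>R fx (g z) + Im (g1 z * h) *\<^sub>R fy (g z)"
        "P g1" "DP g1 g2" "P (\<lambda>z. \<i> * g1 z)" "DP (\<lambda>z. \<i> * g1 z) (\<lambda>z. \<i> * g2 z)"])
    fix z assume z: "z \<in> S"
    then have "g z \<in> T" using gST by blast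
    show "((\<lambda>z. f (g z)) has_derivative (\<lambda>h. Re (g1 z * h) *\<^sub>R fx (g z) + Im (g1 z * h) *\<^sub>R fy (g z))) (at z)"
      using has_derivative_compose[OF dg(1)[OF z] df[OF \<open>g z \<in> T\<close>]] .
    show "(P g1 has_derivative DP g1 g2 z) (at z)" using dP dg(2) z by blast
    show "(P (\<lambda>z. \<i> * g1 z) has_derivative DP (\<lambda>z. \<i> * g1 z) (\<lambda>z. \<i> * g2 z) z) (at z)"
      using dP[OF z] has_derivative_mult_right[OF dg(2)[OF z], of \<i>] by (simp add: mult.assoc)
    show "Re (g1 z * 1) *\<^sub>R fx (g z) + Im (g1 z * 1) *\<^sub>R fy (g z) = P g1 z \<and>
          Re (g1 z * \<i>) *\<^sub>R fx (g z) + Im (g1 z * \<i>) *\<^sub>R fy (g z) = P (\<lambda>z. \<i> * g1 z) z"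
      by (simp add: P_def mult.commute)
    have "fyy (g z) = - fxx (g z)" using laplace[OF \<open>g z \<in> T\<close>] by (simp add: eq_neg_iff_add_eq_0 add.commute)
    then show "DP g1 g2 z 1 + DP (\<lambda>z. \<i> * g1 z) (\<lambda>z. \<i> * g2 z) z \<i> = 0"
      by (simp add: DP_def scaleR_conv_of_real algebra_simps)
  qed (use assms(3) cont[THEN cont_g] cg in \<open>auto simp: P_def DP_def intro!: continuous_intros\<close>)
qed

lemma Har_compose_holomorphic_selfmap:
  assumes "\<phi> \<in> Har" and "g holomorphic_on ball 0 1" and "g ` ball 0 1 \<subseteq> ball 0 1"
  shows "(\<lambda>z. \<phi> (g z)) \<in> Har"
  using assms harmonic_on_compose_holomorphic[of \<phi> "ball 0 1" g "ball 0 1"] by (auto simp: Har_def)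

section \<open>A sine perturbation of the identity on the right half-plane\<close>

lemma uniform_limit_compose_continuous_on:
  fixes f :: "'b::{real_normed_vector, heine_borel} \<Rightarrow> 'c::metric_space"
  assumes lim: "uniform_limit X g l F" and "continuous_on U f" and "open U"
    and "compact (l ` X)" and "l ` X \<subseteq> U"
  shows "uniform_limit X (\<lambda>n x. f (g n x)) (\<lambda>x. f (l x)) F"
proof -
  obtain \<rho> where "\<rho> > 0" and \<rho>: "(\<Union>y\<in>l ` X. cball y \<rho>) \<subseteq> U"
    by (rule compact_subset_open_imp_cball_epsilon_subset[OF assms(4,3,5)])
  define V where "V = {y + v | y v. y \<in> l ` X \<and> v \<in> cball 0 \<rho>}"
  have "compact V" unfolding V_def by (intro compact_sums assms(4) compact_cball)
  have V: "y \<in> V" if "x \<in> X" "dist y (l x) \<le> \<rho>" for x y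
  proof -
    have "y = l x + (y - l x)" "l x \<in> l ` X" "y - l x \<in> cball 0 \<rho>"
      using that by (auto simp: dist_norm norm_minus_commute)
    then show ?thesis unfolding V_def by blast
  qed
  have "V \<subseteq> (\<Union>y\<in>l ` X. cball y \<rho>)"
    unfolding V_def by (force simp: dist_norm)
  with \<rho> have "V \<subseteq> U" by blast
  then have "uniformly_continuous_on V f"
    using \<open>compact V\<close> assms(2) by (blast intro: compact_uniformly_continuous continuous_on_subset)
  moreover have "\<forall>\<^sub>F n in F. g n ` X \<subseteq> V"
    using uniform_limitD[OF lim \<open>\<rho> > 0\<close>] by eventually_elim (auto intro: V less_imp_le)
  moreover have "l ` X \<subseteq> V" using V \<open>\<rho> > 0\<close> by auto
  ultimately show ?thesis
    using uniform_limit_compose[OF lim] by (simp add: o_def)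
qed

lemma norm_sin_minus_self_le:
  fixes z :: complex
  assumes "norm z \<le> 1"
  shows "norm (sin z - z) \<le> 3 * (norm z)\<^sup>2"
proof -
  have "norm (sin z - z) \<le> exp \<bar>Im z\<bar> * (norm z)\<^sup>2"
    using Taylor_sin[of z 1] by (simp add: sin_coeff_def power2_eq_square)
  also have "exp \<bar>Im z\<bar> \<le> 3"
    using abs_Im_le_cmod[of z] assms exp_le by (meson exp_le_cancel_iff order_trans)
  then have "exp \<bar>Im z\<bar> * (norm z)\<^sup>2 \<le> 3 * (norm z)\<^sup>2" by (simp add: mult_right_mono)
  finally show ?thesis .
qed

definition strip_sine :: "real \<Rightarrow> complex \<Rightarrow> complex" where
  "strip_sine \<theta> w = of_real (pi / (2 * sinh \<theta>)) * sin (of_real (2 * \<theta> / pi) * w)"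

lemma abs_Im_strip_sine_less:
  assumes "\<theta> > 0" and "\<bar>Im w\<bar> < pi / 2"
  shows "\<bar>Im (strip_sine \<theta> w)\<bar> < pi / 2"
proof -
  define s where "s = 2 * \<theta> / pi"
  have "Im (sin z) = cos (Re z) * sinh (Im z)" for z
    by (simp add: Im_sin sinh_field_def)
  then have "\<bar>Im (strip_sine \<theta> w)\<bar> = pi / (2 * sinh \<theta>) * (\<bar>cos (s * Re w)\<bar> * \<bar>sinh (s * Im w)\<bar>)"
    using assms(1) by (simp add: strip_sine_def s_def abs_mult)
  also have "\<dots> \<le> pi / (2 * sinh \<theta>) * \<bar>sinh (s * Im w)\<bar>"
    using assms(1) abs_cos_le_one by (intro mult_left_mono mult_left_le_one_le) auto
  also have "\<dots> < pi / (2 * sinh \<theta>) * sinh \<theta>"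
  proof -
    have "\<bar>s * Im w\<bar> < \<theta>"
      using assms by (simp add: s_def abs_mult field_simps)
    then have "\<bar>sinh (s * Im w)\<bar> < sinh \<theta>"
      by (metis sinh_real_abs sinh_real_less_iff)
    then show ?thesis using assms(1) by (intro mult_strict_left_mono) auto
  qed
  finally show ?thesis using assms(1) by simp
qed

lemma strip_sine_periodic:
  assumes "\<bar>c\<bar> = pi\<^sup>2 / \<theta>"
  shows "strip_sine \<theta> (of_real c + w) = strip_sine \<theta> w"
proof -
  define p where "p = 2 * \<theta> / pi * c"
  have "p = 2 * pi \<or> p = - (2 * pi) \<or> p = 0"
    using assms by (cases "\<theta> = 0") (auto simp: p_def abs_if power2_eq_square field_simps split: if_splits)
  then have "sin (complex_of_real p) = 0" "cos (complex_of_real p) = 1"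
    unfolding sin_of_real cos_of_real by auto
  then have "sin (of_real p + x) = sin x" for x :: complex
    by (simp add: sin_add)
  moreover have "of_real (2 * \<theta> / pi) * (of_real c + w) = of_real p + of_real (2 * \<theta> / pi) * w"
    by (simp add: p_def distrib_left)
  ultimately show ?thesis
    by (simp add: strip_sine_def)
qed

lemma norm_sin_scaled_minus_le:
  fixes w :: complex
  assumes "s > 0" and "s * norm w \<le> 1"
  shows "norm (sin (of_real s * w) / of_real s - w) \<le> 3 * s * (norm w)\<^sup>2"
proof -
  have "norm (of_real s * w) \<le> 1" using assms by (simp add: norm_mult)
  then have "norm (sin (of_real s * w) - of_real s * w) \<le> 3 * (s * norm w)\<^sup>2"
    using norm_sin_minus_self_le[of "of_real s * w"] assms(1) by (simp add: norm_mult)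
  moreover have "sin (of_real s * w) / of_real s - w = (sin (of_real s * w) - of_real s * w) / of_real s"
    using assms(1) by (simp add: diff_divide_distrib)
  ultimately have "norm (sin (of_real s * w) / of_real s - w) \<le> 3 * (s * norm w)\<^sup>2 / s"
    using assms(1) by (simp add: norm_divide divide_right_mono)
  also have "\<dots> = 3 * s * (norm w)\<^sup>2"
    using assms(1) by (simp add: power2_eq_square)
  finally show ?thesis .
qed

lemma norm_strip_sine_minus_le:
  assumes "\<theta> > 0" and "2 * \<theta> / pi * R \<le> 1" and "norm w \<le> R"
  shows "norm (strip_sine \<theta> w - w) \<le> 4 * R * \<bar>\<theta> / sinh \<theta> - 1\<bar> + 6 / pi * \<theta> * R\<^sup>2"
proof -
  define s where "s = 2 * \<theta> / pi"
  define S where "S = sin (of_real s * w) / of_real s"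
  have "s > 0" "s * R \<le> 1" using assms(1,2) by (simp_all add: s_def)
  have "R \<ge> 0" using assms(3) norm_ge_zero order_trans by blast
  have "s * norm w \<le> 1"
    using \<open>s * R \<le> 1\<close> mult_left_mono[OF assms(3), of s] \<open>s > 0\<close> by linarith
  then have "norm (S - w) \<le> 3 * s * (norm w)\<^sup>2"
    unfolding S_def using \<open>s > 0\<close> by (rule norm_sin_scaled_minus_le[rotated])
  also have "\<dots> \<le> 3 * s * R\<^sup>2"
    using \<open>s > 0\<close> assms(3) by (intro mult_left_mono power_mono) auto
  finally have close: "norm (S - w) \<le> 3 * s * R\<^sup>2" .
  have "3 * s * R\<^sup>2 = 3 * R * (s * R)" by (simp add: power2_eq_square)
  also have "\<dots> \<le> 3 * R" using \<open>s * R \<le> 1\<close> \<open>R \<ge> 0\<close> by (simp add: mult_left_le)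
  finally have "norm S \<le> 4 * R"
    using close assms(3) norm_triangle_ineq2[of S w] by linarith
  have "\<theta> / sinh \<theta> / s = pi / (2 * sinh \<theta>)"
    using assms(1) by (simp add: s_def)
  then have "of_real (\<theta> / sinh \<theta>) * S = strip_sine \<theta> w"
    unfolding strip_sine_def S_def s_def[symmetric] by (metis of_real_divide times_divide_eq_left times_divide_eq_right)
  then have "strip_sine \<theta> w - w = of_real (\<theta> / sinh \<theta> - 1) * S + (S - w)"
    by (simp add: algebra_simps)
  then have "norm (strip_sine \<theta> w - w) \<le> \<bar>\<theta> / sinh \<theta> - 1\<bar> * norm S + norm (S - w)"
    by (metis norm_mult norm_of_real norm_triangle_ineq)
  also have "\<dots> \<le> \<bar>\<theta> / sinh \<theta> - 1\<bar> * (4 * R) + 3 * s * R\<^sup>2"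
    using \<open>norm S \<le> 4 * R\<close> close by (intro add_mono mult_left_mono) auto
  finally show ?thesis by (simp add: s_def mult.commute)
qed

lemma uniform_limit_strip_sine: "uniform_limit (cball 0 R) strip_sine (\<lambda>w. w) (at_right 0)"
proof (rule uniform_limitI)
  fix e :: real assume "e > 0"
  have "((\<lambda>\<theta>::real. \<theta> / sinh \<theta>) \<longlongrightarrow> 1) (at_right 0)"
    by real_asymp
  then have "((\<lambda>\<theta>. 4 * R * \<bar>\<theta> / sinh \<theta> - 1\<bar> + 6 / pi * \<theta> * R\<^sup>2) \<longlongrightarrow>
      4 * R * \<bar>1 - 1\<bar> + 6 / pi * 0 * R\<^sup>2) (at_right 0)"
    by (intro tendsto_intros) (auto intro: tendsto_ident_at)
  then have "\<forall>\<^sub>F \<theta> in at_right 0. 4 * R * \<bar>\<theta> / sinh \<theta> - 1\<bar> + 6 / pi * \<theta> * R\<^sup>2 < e"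
    using \<open>e > 0\<close> by (simp add: order_tendstoD)
  moreover have "((\<lambda>\<theta>. 2 * \<theta> / pi * R) \<longlongrightarrow> 2 * 0 / pi * R) (at_right (0::real))"
    by (intro tendsto_intros) (auto intro: tendsto_ident_at)
  then have "\<forall>\<^sub>F \<theta> in at_right 0. 2 * \<theta> / pi * R < 1"
    by (rule order_tendstoD(2)) simp
  moreover have "\<forall>\<^sub>F \<theta> in at_right (0::real). \<theta> > 0"
    by (simp add: eventually_at_right_less)
  ultimately show "\<forall>\<^sub>F \<theta> in at_right 0. \<forall>w\<in>cball 0 R. dist (strip_sine \<theta> w) w < e"
  proof eventually_elim
    case (elim \<theta>)
    then show ?case
      using norm_strip_sine_minus_le[of \<theta> R] by (fastforce simp: dist_norm)
  qed
qed

definition halfplane_sine :: "real \<Rightarrow> complex \<Rightarrow> complex" where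
  "halfplane_sine \<theta> u = exp (strip_sine \<theta> (Ln u))"

lemma Re_halfplane_sine_pos:
  assumes "\<theta> > 0" and "Re u > 0"
  shows "Re (halfplane_sine \<theta> u) > 0"
proof -
  have "\<bar>Im (strip_sine \<theta> (Ln u))\<bar> < pi / 2"
    using assms by (intro abs_Im_strip_sine_less Re_Ln_pos_lt_imp)
  then have "cos (Im (strip_sine \<theta> (Ln u))) > 0"
    by (intro cos_gt_zero_pi) auto
  then show ?thesis
    by (simp add: halfplane_sine_def Re_exp)
qed

lemma halfplane_sine_dilation:
  assumes "r > 0" and "u \<noteq> 0" and "\<bar>ln r\<bar> = pi\<^sup>2 / \<theta>"
  shows "halfplane_sine \<theta> (of_real r * u) = halfplane_sine \<theta> u"
proof -
  have "Ln (of_real r * u) = of_real (ln r) + Ln u"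
    using assms by (simp add: Ln_times_of_real Ln_of_real)
  then show ?thesis
    using strip_sine_periodic[OF assms(3)] by (simp add: halfplane_sine_def)
qed

lemma halfplane_sine_holomorphic: "halfplane_sine \<theta> holomorphic_on {u. Re u > 0}"
  unfolding halfplane_sine_def[abs_def] strip_sine_def
  by (intro holomorphic_intros) (auto simp: complex_nonpos_Reals_iff)

lemma uniform_limit_halfplane_sine:
  assumes "compact C" and "C \<subseteq> {u. Re u > 0}"
  shows "uniform_limit C halfplane_sine (\<lambda>u. u) (at_right 0)"
proof -
  have "continuous_on C Ln"
    using assms(2) by (intro holomorphic_on_imp_continuous_on holomorphic_intros)
      (auto simp: complex_nonpos_Reals_iff)
  then have "compact (Ln ` C)" using assms(1) by (rule compact_continuous_image)
  then have "bounded (Ln ` C)" by (rule compact_imp_bounded)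
  then obtain R where "\<And>w. w \<in> Ln ` C \<Longrightarrow> norm w \<le> R" by (auto simp: bounded_iff)
  then have "Ln ` C \<subseteq> cball 0 R" by auto
  then have "uniform_limit (Ln ` C) strip_sine (\<lambda>w. w) (at_right 0)"
    using uniform_limit_strip_sine uniform_limit_on_subset by blast
  then have "uniform_limit (Ln ` C) (\<lambda>\<theta> w. exp (strip_sine \<theta> w)) exp (at_right 0)"
    by (rule uniform_limit_compose_continuous_on[OF _ continuous_on_exp[OF continuous_on_id] open_UNIV])
      (use \<open>compact (Ln ` C)\<close> in auto)
  then have "uniform_limit C (\<lambda>\<theta> u. exp (strip_sine \<theta> (Ln u))) (\<lambda>u. exp (Ln u)) (at_right 0)"
    by (rule uniform_limit_compose') auto
  moreover have "exp (Ln u) = u" if "u \<in> C" for u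
    using assms(2) that by (intro exp_Ln) auto
  ultimately show ?thesis
    by (subst (asm) uniform_limit_cong'[where g = halfplane_sine and i = "\<lambda>u. u"])
      (auto simp: halfplane_sine_def)
qed

section \<open>Moebius transformations of the disc and Cayley transforms\<close>

lemma norm_moeb_num_minus_denom:
  "(cmod (\<alpha> * z + \<beta>))\<^sup>2 - (cmod (cnj \<beta> * z + cnj \<alpha>))\<^sup>2 =
     ((cmod \<alpha>)\<^sup>2 - (cmod \<beta>)\<^sup>2) * ((cmod z)\<^sup>2 - 1)"
  unfolding cmod_power2 by (simp add: power2_eq_square algebra_simps)

lemma moeb_maps_disc:
  assumes "cmod \<beta> < cmod \<alpha>" and "cmod z < 1"
  shows "cnj \<beta> * z + cnj \<alpha> \<noteq> 0" and "cmod (moeb \<alpha> \<beta> z) < 1"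
proof -
  have "((cmod \<alpha>)\<^sup>2 - (cmod \<beta>)\<^sup>2) * ((cmod z)\<^sup>2 - 1) < 0"
    using assms by (intro mult_pos_neg) (auto simp: power_strict_mono abs_square_less_1)
  then have lt: "(cmod (\<alpha> * z + \<beta>))\<^sup>2 < (cmod (cnj \<beta> * z + cnj \<alpha>))\<^sup>2"
    using norm_moeb_num_minus_denom[of \<alpha> z \<beta>] by linarith
  then show nz: "cnj \<beta> * z + cnj \<alpha> \<noteq> 0"
    by auto
  have "cmod (\<alpha> * z + \<beta>) < cmod (cnj \<beta> * z + cnj \<alpha>)"
    using lt by (rule power2_less_imp_less) simp
  then show "cmod (moeb \<alpha> \<beta> z) < 1"
    using nz by (simp add: moeb_def norm_divide divide_less_eq)
qed

lemma norm_moeb_iter_less_1: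
  assumes "cmod \<beta> < cmod \<alpha>" and "cmod z < 1"
  shows "cmod ((moeb \<alpha> \<beta> ^^ k) z) < 1"
  by (induction k) (use assms moeb_maps_disc(2)[OF assms(1)] in auto)

lemma moeb_diff:
  fixes z w :: complex
  assumes "cnj \<beta> * z + cnj \<alpha> \<noteq> 0" and "cnj \<beta> * w + cnj \<alpha> \<noteq> 0"
  shows "moeb \<alpha> \<beta> z - moeb \<alpha> \<beta> w =
           (\<alpha> * cnj \<alpha> - \<beta> * cnj \<beta>) * (z - w) / ((cnj \<beta> * z + cnj \<alpha>) * (cnj \<beta> * w + cnj \<alpha>))"
  using assms unfolding moeb_def by (simp add: divide_simps) (simp add: algebra_simps)

definition cayley :: "complex \<Rightarrow> complex \<Rightarrow> complex" where
  "cayley c z = (c + z) / (c - z)"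

definition cayley_inv :: "complex \<Rightarrow> complex \<Rightarrow> complex" where
  "cayley_inv c v = c * (v - 1) / (v + 1)"

lemma Re_cayley:
  assumes "cmod c = 1" and "z \<noteq> c"
  shows "Re (cayley c z) = (1 - (cmod z)\<^sup>2) / (cmod (c - z))\<^sup>2"
proof -
  have c: "(Re c)\<^sup>2 + (Im c)\<^sup>2 = 1" using assms(1) by (simp add: cmod_def)
  have "Re (cayley c z) = (Re (c + z) * Re (c - z) + Im (c + z) * Im (c - z)) / (cmod (c - z))\<^sup>2"
    by (simp add: cayley_def Re_divide cmod_power2)
  also have "Re (c + z) * Re (c - z) + Im (c + z) * Im (c - z) = 1 - (cmod z)\<^sup>2"
    using c unfolding cmod_power2 by (simp add: algebra_simps power2_eq_square)
  finally show ?thesis .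
qed

lemma cayley_diff:
  assumes "z \<noteq> c" and "p \<noteq> c"
  shows "cayley c z - cayley c p = 2 * c * (z - p) / ((c - z) * (c - p))"
  using assms by (simp add: cayley_def divide_simps) (simp add: algebra_simps)

lemma cayley_inv_cayley:
  assumes "z \<noteq> c" and "c \<noteq> 0"
  shows "cayley_inv c (cayley c z) = z"
  using assms by (simp add: cayley_def cayley_inv_def divide_simps)

lemma norm_cayley_inv_less:
  assumes "cmod c = 1" and "Re v > 0"
  shows "cmod (cayley_inv c v) < 1"
proof -
  have "v + 1 \<noteq> 0" using assms(2) by (auto simp: complex_eq_iff)
  have "(cmod (v - 1))\<^sup>2 < (cmod (v + 1))\<^sup>2"
    using assms(2) unfolding cmod_power2 by (simp add: power2_eq_square algebra_simps)
  then have "cmod (v - 1) < cmod (v + 1)" by (rule power2_less_imp_less) simp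
  then show ?thesis
    using assms(1) \<open>v + 1 \<noteq> 0\<close> by (simp add: cayley_inv_def norm_divide norm_mult divide_less_eq)
qed

section \<open>Invariant self-maps for a hyperbolic transformation\<close>

locale hyperbolic_moeb =
  fixes \<alpha> \<beta> :: complex
  assumes hyperbolic: "hyperbolic \<alpha> \<beta>"
begin

(* Re alpha +- sqrt_disc are the eigenvalues of [[alpha, beta], [cnj beta, cnj alpha]]; fix_plus
   and fix_minus are the fixed points of moeb alpha beta where its denominator takes these values. *)
definition sqrt_disc :: real where
  "sqrt_disc = sqrt ((Re \<alpha>)\<^sup>2 - 1)"

definition fix_plus :: complex where
  "fix_plus = (\<i> * of_real (Im \<alpha>) + of_real sqrt_disc) / cnj \<beta>"

definition fix_minus :: complex where
  "fix_minus = (\<i> * of_real (Im \<alpha>) - of_real sqrt_disc) / cnj \<beta>"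

definition multiplier :: real where
  "multiplier = (Re \<alpha> - sqrt_disc) / (Re \<alpha> + sqrt_disc)"

definition to_halfplane :: "complex \<Rightarrow> complex" where
  "to_halfplane z = cayley fix_minus z - cayley fix_minus fix_plus"

definition from_halfplane :: "complex \<Rightarrow> complex" where
  "from_halfplane u = cayley_inv fix_minus (u + cayley fix_minus fix_plus)"

lemma det_eq_1: "\<alpha> * cnj \<alpha> - \<beta> * cnj \<beta> = 1" and norm_beta_less: "cmod \<beta> < cmod \<alpha>"
proof -
  have "(cmod \<alpha>)\<^sup>2 - (cmod \<beta>)\<^sup>2 = 1" using hyperbolic by (simp add: hyperbolic_def)
  then show "\<alpha> * cnj \<alpha> - \<beta> * cnj \<beta> = 1"
    by (metis complex_norm_square of_real_1 of_real_diff)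
  show "cmod \<beta> < cmod \<alpha>"
    using \<open>(cmod \<alpha>)\<^sup>2 - (cmod \<beta>)\<^sup>2 = 1\<close> by (simp add: power2_less_imp_less)
qed

lemma sqrt_disc_pos: "sqrt_disc > 0"
  and sqrt_disc_square: "sqrt_disc\<^sup>2 = (Re \<alpha>)\<^sup>2 - 1"
  and sqrt_disc_less: "sqrt_disc < \<bar>Re \<alpha>\<bar>"
proof -
  have "\<bar>Re \<alpha>\<bar> > 1" using hyperbolic by (simp add: hyperbolic_def abs_mult)
  then have "(Re \<alpha>)\<^sup>2 > 1" by (meson abs_square_le_1 not_le)
  then show "sqrt_disc > 0" "sqrt_disc\<^sup>2 = (Re \<alpha>)\<^sup>2 - 1" by (simp_all add: sqrt_disc_def)
  then have "sqrt_disc\<^sup>2 < \<bar>Re \<alpha>\<bar>\<^sup>2" by simp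
  then show "sqrt_disc < \<bar>Re \<alpha>\<bar>" by (rule power2_less_imp_less) simp
qed

lemma norm_beta_square: "(cmod \<beta>)\<^sup>2 = (Im \<alpha>)\<^sup>2 + sqrt_disc\<^sup>2"
  using hyperbolic sqrt_disc_square by (simp add: hyperbolic_def cmod_power2)

lemma beta_nonzero: "\<beta> \<noteq> 0"
  using norm_beta_square sqrt_disc_pos by (auto simp: add_nonneg_pos)

lemma cnj_beta_fix_plus: "cnj \<beta> * fix_plus = \<i> * of_real (Im \<alpha>) + of_real sqrt_disc"
  and cnj_beta_fix_minus: "cnj \<beta> * fix_minus = \<i> * of_real (Im \<alpha>) - of_real sqrt_disc"
  using beta_nonzero by (simp_all add: fix_plus_def fix_minus_def)

lemma norm_fix_plus: "cmod fix_plus = 1" and norm_fix_minus: "cmod fix_minus = 1"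
proof -
  have "cmod (\<i> * of_real (Im \<alpha>) + of_real sqrt_disc) = cmod \<beta>"
    "cmod (\<i> * of_real (Im \<alpha>) - of_real sqrt_disc) = cmod \<beta>"
    using norm_beta_square by (simp_all add: cmod_def)
  then show "cmod fix_plus = 1" "cmod fix_minus = 1"
    using beta_nonzero by (simp_all add: fix_plus_def fix_minus_def norm_divide)
qed

lemma fix_plus_neq_fix_minus: "fix_plus \<noteq> fix_minus"
  using cnj_beta_fix_plus cnj_beta_fix_minus sqrt_disc_pos by (auto simp: complex_eq_iff)

lemma denom_fix_plus: "cnj \<beta> * fix_plus + cnj \<alpha> = Re \<alpha> + sqrt_disc"
  and denom_fix_minus: "cnj \<beta> * fix_minus + cnj \<alpha> = Re \<alpha> - sqrt_disc"
  by (simp_all add: cnj_beta_fix_plus cnj_beta_fix_minus complex_eq_iff)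

lemma eig_nonzero: "Re \<alpha> + sqrt_disc \<noteq> 0" "Re \<alpha> - sqrt_disc \<noteq> 0"
  using sqrt_disc_pos sqrt_disc_less by (auto simp: abs_if)

lemma complex_eig_nonzero: "complex_of_real (Re \<alpha>) + sqrt_disc \<noteq> 0" "complex_of_real (Re \<alpha>) - sqrt_disc \<noteq> 0"
  using eig_nonzero by (metis of_real_add of_real_diff of_real_eq_0_iff)+

lemma moeb_fixed_pointI:
  assumes "cnj \<beta> * p = \<i> * of_real (Im \<alpha>) + of_real s" and "s\<^sup>2 = sqrt_disc\<^sup>2"
    and "complex_of_real (Re \<alpha>) + s \<noteq> 0"
  shows "moeb \<alpha> \<beta> p = p"
proof -
  have "cnj \<beta> * (\<alpha> * p + \<beta>) = \<alpha> * (cnj \<beta> * p) + \<beta> * cnj \<beta>"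
    by (simp add: algebra_simps)
  also have "\<beta> * cnj \<beta> = of_real ((Im \<alpha>)\<^sup>2 + s\<^sup>2)"
    by (metis assms(2) complex_norm_square norm_beta_square)
  also have "\<alpha> * (cnj \<beta> * p) + of_real ((Im \<alpha>)\<^sup>2 + s\<^sup>2) = (cnj \<beta> * p) * (Re \<alpha> + s)"
    unfolding assms(1) by (simp add: complex_eq_iff power2_eq_square algebra_simps)
  finally have "\<alpha> * p + \<beta> = p * (Re \<alpha> + s)"
    using beta_nonzero by (simp add: mult.assoc)
  moreover have "cnj \<beta> * p + cnj \<alpha> = Re \<alpha> + s"
    using assms(1) by (simp add: complex_eq_iff)
  ultimately show ?thesis
    using assms(3) by (simp add: moeb_def)
qed

lemma moeb_fix_plus: "moeb \<alpha> \<beta> fix_plus = fix_plus"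
  and moeb_fix_minus: "moeb \<alpha> \<beta> fix_minus = fix_minus"
   by (rule moeb_fixed_pointI[of _ sqrt_disc], use cnj_beta_fix_plus complex_eig_nonzero in auto)
     (rule moeb_fixed_pointI[of _ "- sqrt_disc"], use cnj_beta_fix_minus complex_eig_nonzero in auto)

lemma moeb_minus_fix:
  assumes "cmod z < 1"
  shows "moeb \<alpha> \<beta> z - fix_plus = (z - fix_plus) / ((cnj \<beta> * z + cnj \<alpha>) * (Re \<alpha> + sqrt_disc))"
    and "moeb \<alpha> \<beta> z - fix_minus = (z - fix_minus) / ((cnj \<beta> * z + cnj \<alpha>) * (Re \<alpha> - sqrt_disc))"
  using moeb_diff[of \<beta> z \<alpha> fix_plus] moeb_diff[of \<beta> z \<alpha> fix_minus] moeb_maps_disc(1)[OF norm_beta_less assms]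
    complex_eig_nonzero
  by (simp_all add: moeb_fix_plus moeb_fix_minus denom_fix_plus denom_fix_minus det_eq_1)

lemma multiplier_pos: "multiplier > 0" and multiplier_neq_1: "multiplier \<noteq> 1"
proof -
  have "(Re \<alpha> - sqrt_disc) * (Re \<alpha> + sqrt_disc) = 1"
    using sqrt_disc_square by (simp add: algebra_simps power2_eq_square)
  then show "multiplier > 0"
    unfolding multiplier_def by (metis divide_pos_pos divide_neg_neg mult_less_0_iff zero_less_one
        zero_less_mult_iff)
  show "multiplier \<noteq> 1"
    using sqrt_disc_pos eig_nonzero by (simp add: multiplier_def divide_eq_1_iff)
qed

lemma to_halfplane_eq:
  assumes "z \<noteq> fix_minus"
  shows "to_halfplane z = 2 * fix_minus * (z - fix_plus) / ((fix_minus - z) * (fix_minus - fix_plus))"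
  using cayley_diff[OF assms] fix_plus_neq_fix_minus by (simp add: to_halfplane_def)

lemma disc_neq_fix_minus: "cmod z < 1 \<Longrightarrow> z \<noteq> fix_minus"
  using norm_fix_minus by auto

lemma to_halfplane_moeb:
  assumes "cmod z < 1"
  shows "to_halfplane (moeb \<alpha> \<beta> z) = multiplier * to_halfplane z"
proof -
  define N where "N = cnj \<beta> * z + cnj \<alpha>"
  define lp where "lp = complex_of_real (Re \<alpha>) + sqrt_disc"
  define lm where "lm = complex_of_real (Re \<alpha>) - sqrt_disc"
  have nz: "N \<noteq> 0" "lp \<noteq> 0" "lm \<noteq> 0" "fix_minus - z \<noteq> 0" "fix_minus - fix_plus \<noteq> 0"
    using moeb_maps_disc(1)[OF norm_beta_less assms] complex_eig_nonzero disc_neq_fix_minus[OF assms]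
      fix_plus_neq_fix_minus
    by (auto simp: N_def lp_def lm_def)
  have "to_halfplane (moeb \<alpha> \<beta> z) =
      2 * fix_minus * (moeb \<alpha> \<beta> z - fix_plus) / ((fix_minus - moeb \<alpha> \<beta> z) * (fix_minus - fix_plus))"
    using moeb_maps_disc(2)[OF norm_beta_less assms] by (intro to_halfplane_eq disc_neq_fix_minus)
  also have "\<dots> = 2 * fix_minus * ((z - fix_plus) / (N * lp)) /
      ((fix_minus - z) / (N * lm) * (fix_minus - fix_plus))"
  proof -
    have "fix_minus - moeb \<alpha> \<beta> z = - (moeb \<alpha> \<beta> z - fix_minus)" by simp
    also have "\<dots> = (fix_minus - z) / (N * lm)"
      using moeb_minus_fix(2)[OF assms] by (simp add: N_def lm_def minus_divide_left)
    finally show ?thesis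
      using moeb_minus_fix(1)[OF assms] by (simp add: N_def lp_def)
  qed
  also have "\<dots> = lm / lp * (2 * fix_minus * (z - fix_plus) / ((fix_minus - z) * (fix_minus - fix_plus)))"
    using nz by (simp add: divide_divide_eq_left divide_divide_eq_right mult.commute mult.left_commute)
  also have "\<dots> = multiplier * to_halfplane z"
    using to_halfplane_eq[OF disc_neq_fix_minus[OF assms]] by (simp add: lp_def lm_def multiplier_def)
  finally show ?thesis .
qed

lemma Re_cayley_fix_plus: "Re (cayley fix_minus fix_plus) = 0"
  using Re_cayley[OF norm_fix_minus fix_plus_neq_fix_minus] norm_fix_plus by simp

lemma Re_to_halfplane_pos:
  assumes "cmod z < 1"
  shows "Re (to_halfplane z) > 0"
proof -
  have "Re (cayley fix_minus z) > 0"
    using Re_cayley[OF norm_fix_minus disc_neq_fix_minus[OF assms]] assms disc_neq_fix_minus[OF assms]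
    by (simp add: abs_square_less_1)
  then show ?thesis by (simp add: to_halfplane_def Re_cayley_fix_plus)
qed

lemma from_to_halfplane: "cmod z < 1 \<Longrightarrow> from_halfplane (to_halfplane z) = z"
proof -
  assume "cmod z < 1"
  moreover have "fix_minus \<noteq> 0" using norm_fix_minus by auto
  ultimately show ?thesis
    using cayley_inv_cayley[OF disc_neq_fix_minus] by (simp add: from_halfplane_def to_halfplane_def)
qed

lemma norm_from_halfplane_less: "Re u > 0 \<Longrightarrow> cmod (from_halfplane u) < 1"
  by (simp add: from_halfplane_def norm_cayley_inv_less[OF norm_fix_minus] Re_cayley_fix_plus)

lemma to_halfplane_holomorphic: "to_halfplane holomorphic_on ball 0 1"
  unfolding to_halfplane_def[abs_def] cayley_def
  by (intro holomorphic_intros) (use disc_neq_fix_minus in auto)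

lemma from_halfplane_holomorphic: "from_halfplane holomorphic_on {u. Re u > 0}"
  unfolding from_halfplane_def[abs_def] cayley_inv_def
  by (intro holomorphic_intros) (use Re_cayley_fix_plus in \<open>auto simp: complex_eq_iff\<close>)

lemma to_halfplane_moeb_iter:
  assumes "cmod z < 1"
  shows "to_halfplane ((moeb \<alpha> \<beta> ^^ k) z) = multiplier ^ k * to_halfplane z"
  by (induction k) (use assms norm_moeb_iter_less_1[OF norm_beta_less assms] to_halfplane_moeb in auto)

definition periodic_selfmap :: "real \<Rightarrow> complex \<Rightarrow> complex" where
  "periodic_selfmap \<theta> z = from_halfplane (halfplane_sine \<theta> (to_halfplane z))"

lemma periodic_selfmap_holomorphic:
  assumes "\<theta> > 0"
  shows "periodic_selfmap \<theta> holomorphic_on ball 0 1"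
proof -
  have "(from_halfplane \<circ> (halfplane_sine \<theta> \<circ> to_halfplane)) holomorphic_on ball 0 1"
    using Re_to_halfplane_pos Re_halfplane_sine_pos[OF assms]
    by (intro holomorphic_on_compose_gen[OF _ from_halfplane_holomorphic]
        holomorphic_on_compose_gen[OF to_halfplane_holomorphic halfplane_sine_holomorphic]) auto
  then show ?thesis unfolding periodic_selfmap_def[abs_def] o_def .
qed

lemma periodic_selfmap_disc: "\<theta> > 0 \<Longrightarrow> cmod z < 1 \<Longrightarrow> cmod (periodic_selfmap \<theta> z) < 1"
  unfolding periodic_selfmap_def
  by (intro norm_from_halfplane_less Re_halfplane_sine_pos Re_to_halfplane_pos)

definition period_param :: "nat \<Rightarrow> real" where
  "period_param k = pi\<^sup>2 / (real k * \<bar>ln multiplier\<bar>)"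

lemma period_param_pos: "k \<ge> 1 \<Longrightarrow> period_param k > 0"
  using multiplier_pos multiplier_neq_1 by (simp add: period_param_def)

lemma filterlim_period_param: "filterlim period_param (at_right 0) sequentially"
  using multiplier_pos multiplier_neq_1 unfolding period_param_def by real_asymp

lemma periodic_selfmap_moeb_iter:
  assumes "cmod z < 1"
  shows "periodic_selfmap (period_param k) ((moeb \<alpha> \<beta> ^^ k) z) = periodic_selfmap (period_param k) z"
proof -
  have "to_halfplane z \<noteq> 0" using Re_to_halfplane_pos[OF assms(1)] by auto
  moreover have "\<bar>ln (multiplier ^ k)\<bar> = pi\<^sup>2 / period_param k"
    using multiplier_pos by (simp add: period_param_def ln_realpow abs_mult)
  ultimately have "halfplane_sine (period_param k) (of_real (multiplier ^ k) * to_halfplane z) =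
      halfplane_sine (period_param k) (to_halfplane z)"
    using multiplier_pos by (intro halfplane_sine_dilation) auto
  then show ?thesis
    by (simp add: periodic_selfmap_def to_halfplane_moeb_iter[OF assms(1)])
qed

lemma uniform_limit_periodic_selfmap:
  assumes "compact K" and "K \<subseteq> ball 0 1"
  shows "uniform_limit K periodic_selfmap (\<lambda>z. z) (at_right 0)"
proof -
  have "continuous_on (ball 0 1) to_halfplane"
    by (rule holomorphic_on_imp_continuous_on[OF to_halfplane_holomorphic])
  then have "compact (to_halfplane ` K)"
    using assms by (blast intro: compact_continuous_image continuous_on_subset)
  moreover have "to_halfplane ` K \<subseteq> {u. Re u > 0}"
    using assms(2) Re_to_halfplane_pos by auto
  ultimately have "uniform_limit (to_halfplane ` K) (\<lambda>\<theta> u. from_halfplane (halfplane_sine \<theta> u))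
      from_halfplane (at_right 0)"
    using uniform_limit_compose_continuous_on[OF uniform_limit_halfplane_sine
        holomorphic_on_imp_continuous_on[OF from_halfplane_holomorphic] open_halfspace_Re_gt]
    by simp
  then have "uniform_limit K periodic_selfmap (\<lambda>z. from_halfplane (to_halfplane z)) (at_right 0)"
    unfolding periodic_selfmap_def[abs_def] by (rule uniform_limit_compose') auto
  moreover have "from_halfplane (to_halfplane z) = z" if "z \<in> K" for z
    using assms(2) that from_to_halfplane by auto
  ultimately show ?thesis
    by (subst (asm) uniform_limit_cong'[where g = periodic_selfmap and i = "\<lambda>z. z"]) auto
qed

lemma uniform_limit_compose_periodic_selfmap:
  assumes "continuous_on (ball 0 1) \<phi>" and "compact K" and "K \<subseteq> ball 0 1"
  shows "uniform_limit K (\<lambda>k z. \<phi> (periodic_selfmap (period_param k) z)) \<phi> sequentially"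
proof -
  have "uniform_limit K (\<lambda>t z. \<phi> (periodic_selfmap t z)) \<phi> (at_right 0)"
    using uniform_limit_compose_continuous_on[OF uniform_limit_periodic_selfmap[OF assms(2,3)] assms(1)]
      assms(2,3) by simp
  then show ?thesis
    using filterlim_period_param by (rule filterlim_compose)
qed

lemma Har_compose_periodic_selfmap:
  assumes "\<phi> \<in> Har" and "k \<ge> 1"
  shows "(\<lambda>z. \<phi> (periodic_selfmap (period_param k) z)) \<in> Har"
proof -
  have "period_param k > 0" using period_param_pos assms(2) .
  then have "periodic_selfmap (period_param k) ` ball 0 1 \<subseteq> ball 0 1"
    using periodic_selfmap_disc by auto
  then show ?thesis
    using Har_compose_holomorphic_selfmap[OF assms(1) periodic_selfmap_holomorphic[OF \<open>period_param k > 0\<close>]]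
    by blast
qed

end

theorem mainTheorem12:
  fixes \<alpha> \<beta> :: complex
  assumes "hyperbolic \<alpha> \<beta>"
  shows "\<forall>\<phi>\<in>Har. \<forall>K. compact K \<and> K \<subseteq> ball 0 1 \<longrightarrow> (\<forall>\<epsilon>>0.
           \<exists>\<psi>\<in>Har. (\<exists>k::nat. k \<ge> 1 \<and> (\<forall>z\<in>ball 0 1. \<psi> ((moeb \<alpha> \<beta> ^^ k) z) = \<psi> z)) \<and>
                  (\<forall>z\<in>K. cmod (\<psi> z - \<phi> z) < \<epsilon>))"
proof (intro ballI allI impI)
  fix \<phi> and K :: "complex set" and \<epsilon> :: real
  assume "\<phi> \<in> Har" and K: "compact K \<and> K \<subseteq> ball 0 1" and "\<epsilon> > 0"
  interpret hyperbolic_moeb \<alpha> \<beta> by unfold_locales (rule assms)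
  define \<psi> where "\<psi> k z = \<phi> (periodic_selfmap (period_param k) z)" for k z
  have "continuous_on (ball 0 1) \<phi>" using \<open>\<phi> \<in> Har\<close> unfolding Har_def harmonic_on_def by blast
  then have "uniform_limit K \<psi> \<phi> sequentially"
    using K unfolding \<psi>_def by (intro uniform_limit_compose_periodic_selfmap) auto
  from uniform_limitD[OF this \<open>\<epsilon> > 0\<close>]
  have "\<forall>\<^sub>F k in sequentially. k \<ge> 1 \<and> (\<forall>z\<in>K. dist (\<psi> k z) (\<phi> z) < \<epsilon>)"
    using eventually_ge_at_top[of 1] by (simp add: eventually_conj_iff)
  then have "\<exists>k. k \<ge> 1 \<and> (\<forall>z\<in>K. dist (\<psi> k z) (\<phi> z) < \<epsilon>)"
    by (rule eventually_happens'[OF sequentially_bot])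
  then obtain k where "k \<ge> 1" and close: "\<forall>z\<in>K. dist (\<psi> k z) (\<phi> z) < \<epsilon>"
    by blast
  show "\<exists>\<psi>\<in>Har. (\<exists>k. k \<ge> 1 \<and> (\<forall>z\<in>ball 0 1. \<psi> ((moeb \<alpha> \<beta> ^^ k) z) = \<psi> z)) \<and>
      (\<forall>z\<in>K. cmod (\<psi> z - \<phi> z) < \<epsilon>)"
  proof (intro bexI[of _ "\<psi> k"] conjI exI[of _ k] ballI)
    show "\<psi> k \<in> Har"
      unfolding \<psi>_def[abs_def] using \<open>\<phi> \<in> Har\<close> \<open>k \<ge> 1\<close> by (rule Har_compose_periodic_selfmap)
    show "k \<ge> 1" by fact
    show "\<psi> k ((moeb \<alpha> \<beta> ^^ k) z) = \<psi> k z" if "z \<in> ball 0 1" for z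
      using that by (simp add: \<psi>_def periodic_selfmap_moeb_iter)
    show "cmod (\<psi> k z - \<phi> z) < \<epsilon>" if "z \<in> K" for z
      using that close by (simp add: dist_norm)
  qed
qed

end
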